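(* Let $\Sigma\cup\{x|y\}$ be a finite set of exclusion atoms. The problem of deciding whether $\Sigma\vdash x|y$ is decidable.
   Context: Letters $x,y,z,u,v,w,\dots$ denote finite tuples of variables; juxtaposition denotes concatenation. An exclusion atom is an expression $x|y$ with $|x|=|y|$. $\Sigma\vdash x|y$ means $x|y$ is derivable from $\Sigma$ using the rules (schemata over arbitrary tuples, atoms well-formed): (E1) $x|x\vdash y|z$; (E2) $x|y\vdash y|x$; (E3) $x|y\vdash xu|yv$; (E4) $xuu|yvv\vdash xu|yv$; (E5) $xyz|uvw\vdash xzy|uwv$ where $|x|=|u|$ and $|y|=|v|$; (E6) $xw|yw\vdash zz|xy$. *)

theory Defs
  imports Main "HOL-Library.Nat_Bijection"
begin

text \<open>Variables are natural numbers, tuples are lists of variables.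
  An exclusion atom x|y is a pair (x, y) of tuples; it is well-formed iff |x| = |y|.\<close>

type_synonym var = nat
type_synonym tuple = "var list"
type_synonym atom = "tuple \<times> tuple"

definition wf_atom :: "atom \<Rightarrow> bool" where
  "wf_atom a \<longleftrightarrow> length (fst a) = length (snd a)"

inductive derivable :: "atom set \<Rightarrow> atom \<Rightarrow> bool" for \<Sigma> :: "atom set" where
  Hyp: "a \<in> \<Sigma> \<Longrightarrow> wf_atom a \<Longrightarrow> derivable \<Sigma> a"
| E1: "derivable \<Sigma> (x, x) \<Longrightarrow> length y = length z \<Longrightarrow> derivable \<Sigma> (y, z)"
| E2: "derivable \<Sigma> (x, y) \<Longrightarrow> derivable \<Sigma> (y, x)"
| E3: "derivable \<Sigma> (x, y) \<Longrightarrow> length u = length v \<Longrightarrow> derivable \<Sigma> (x @ u, y @ v)"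
| E4: "length x = length y \<Longrightarrow> length u = length v \<Longrightarrow>
       derivable \<Sigma> (x @ u @ u, y @ v @ v) \<Longrightarrow> derivable \<Sigma> (x @ u, y @ v)"
| E5: "length x = length u \<Longrightarrow> length y = length v \<Longrightarrow> length z = length w \<Longrightarrow>
       derivable \<Sigma> (x @ y @ z, u @ v @ w) \<Longrightarrow> derivable \<Sigma> (x @ z @ y, u @ w @ v)"
| E6: "length x = length y \<Longrightarrow> length z = length x \<Longrightarrow>
       derivable \<Sigma> (x @ w, y @ w) \<Longrightarrow> derivable \<Sigma> (z @ z, x @ y)"

datatype recf =
    Zero
  | Succ
  | Proj nat
  | Comp recf "recf list"
  | Prim recf recf
  | Mu recf

inductive eval :: "recf \<Rightarrow> nat list \<Rightarrow> nat \<Rightarrow> bool" where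
  ev_Zero: "eval Zero xs 0"
| ev_Succ: "eval Succ (x # xs) (Suc x)"
| ev_Proj: "i < length xs \<Longrightarrow> eval (Proj i) xs (xs ! i)"
| ev_Comp: "length ys = length gs \<Longrightarrow> (\<forall>i < length gs. eval (gs ! i) xs (ys ! i)) \<Longrightarrow>
            eval f ys r \<Longrightarrow> eval (Comp f gs) xs r"
| ev_Prim0: "eval f xs r \<Longrightarrow> eval (Prim f g) (0 # xs) r"
| ev_PrimS: "eval (Prim f g) (k # xs) r0 \<Longrightarrow> eval g (k # r0 # xs) r \<Longrightarrow>
             eval (Prim f g) (Suc k # xs) r"
| ev_Mu: "eval f (r # xs) 0 \<Longrightarrow> (\<forall>k < r. \<exists>v. v > 0 \<and> eval f (k # xs) v) \<Longrightarrow>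
          eval (Mu f) xs r"

definition encode_tuple :: "tuple \<Rightarrow> nat" where
  "encode_tuple x = list_encode x"

definition encode_atom :: "atom \<Rightarrow> nat" where
  "encode_atom a = prod_encode (encode_tuple (fst a), encode_tuple (snd a))"

text \<open>An instance: a finite set Sigma (given by a list enumerating it) and a goal atom.\<close>

definition encode_instance :: "atom list \<Rightarrow> atom \<Rightarrow> nat" where
  "encode_instance S a = prod_encode (list_encode (map encode_atom S), encode_atom a)"

end

theory Submission
  imports Defs "HOL-Library.More_List"
begin

text \<open>Derivability of x|y from \<Sigma> depends only on the set Q of columns (x_i, y_i): rules
  E3--E5 let columns be added, permuted and contracted, and rule E6, with the diagonal columns as
  w, replaces every column (u, v) by two columns (z, u) and (z, v) with a common parent z. Hence
  \<Sigma> derives x|y iff the columns of some atom of \<Sigma> lie in Q, in Q\<inverse>, or in the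
  equivalence relation generated by the sibling relation Q\<inverse> O Q or Q O Q\<inverse>. This
  criterion only involves finitely many values and is checked by a partial recursive function on
  the code of the instance; reachability in the sibling relation is decided by searching for
  either a path or a closed set separating the two values.\<close>

section \<open>A characterisation of derivability\<close>

definition columns :: "atom \<Rightarrow> (var \<times> var) set" where
  "columns a = set (zip (fst a) (snd a))"

definition derivable_criterion :: "atom set \<Rightarrow> (var \<times> var) set \<Rightarrow> bool" where
  "derivable_criterion \<Sigma> Q \<longleftrightarrow> (\<exists>a\<in>\<Sigma>. columns a \<subseteq> Q \<or> columns a \<subseteq> Q\<inverse>
     \<or> columns a \<subseteq> (Q\<inverse> O Q)\<^sup>* \<or> columns a \<subseteq> (Q O Q\<inverse>)\<^sup>*)"

lemma derivable_wf_atom: "derivable \<Sigma> a \<Longrightarrow> wf_atom a"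
  by (induction rule: derivable.induct) (auto simp: wf_atom_def)

lemma derivable_criterion_mono:
  assumes "derivable_criterion \<Sigma> Q" and "Q \<subseteq> P"
  shows "derivable_criterion \<Sigma> P"
proof -
  have "Q\<inverse> O Q \<subseteq> P\<inverse> O P" "Q O Q\<inverse> \<subseteq> P O P\<inverse>" using assms(2) by auto
  then have "(Q\<inverse> O Q)\<^sup>* \<subseteq> (P\<inverse> O P)\<^sup>*" "(Q O Q\<inverse>)\<^sup>* \<subseteq> (P O P\<inverse>)\<^sup>*"
    by (simp_all add: rtrancl_mono)
  with assms show ?thesis unfolding derivable_criterion_def by blast
qed

lemma derivable_criterion_converse:
  "derivable_criterion \<Sigma> Q \<Longrightarrow> derivable_criterion \<Sigma> (Q\<inverse>)"
  unfolding derivable_criterion_def by auto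

lemma derivable_criterion_absorb:
  assumes "derivable_criterion \<Sigma> P" and "P \<subseteq> (Q\<inverse> O Q)\<^sup>*"
  shows "derivable_criterion \<Sigma> Q"
proof -
  let ?K = "(Q\<inverse> O Q)\<^sup>*"
  have "sym ?K" by (rule sym_rtrancl) (auto simp: sym_def)
  then have conv: "?K\<inverse> = ?K" by (simp add: sym_conv_converse_eq)
  have "P\<inverse> \<subseteq> ?K" using assms(2) conv by auto
  moreover have "P\<inverse> O P \<subseteq> ?K" "P O P\<inverse> \<subseteq> ?K"
    using assms(2) \<open>P\<inverse> \<subseteq> ?K\<close> by (auto intro: rtrancl_trans)
  then have "(P\<inverse> O P)\<^sup>* \<subseteq> ?K" "(P O P\<inverse>)\<^sup>* \<subseteq> ?K"
    by (metis rtrancl_subset_rtrancl)+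
  ultimately show ?thesis
    using assms unfolding derivable_criterion_def by (meson subset_trans)
qed

lemma derivable_criterion_E6:
  assumes "derivable_criterion \<Sigma> (set (zip (x @ w) (y @ w)))"
    and "length x = length y" "length z = length x"
  shows "derivable_criterion \<Sigma> (set (zip (z @ z) (x @ y)))"
proof (rule derivable_criterion_absorb[OF assms(1)])
  let ?C = "set (zip (z @ z) (x @ y))"
  have "set (zip x y) \<subseteq> ?C\<inverse> O ?C"
  proof
    fix p assume "p \<in> set (zip x y)"
    then obtain i where "i < length x" "p = (x ! i, y ! i)" using assms(2) by (auto simp: set_zip)
    moreover have "(z ! i, x ! i) \<in> ?C" "(z ! i, y ! i) \<in> ?C"
      using calculation assms(2,3) by (auto simp: set_zip)
    ultimately show "p \<in> ?C\<inverse> O ?C" by blast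
  qed
  moreover have "set (zip w w) \<subseteq> Id" by (auto simp: set_zip)
  ultimately show "set (zip (x @ w) (y @ w)) \<subseteq> (?C\<inverse> O ?C)\<^sup>*"
    using assms(2) by auto
qed

theorem derivable_sound: "derivable \<Sigma> a \<Longrightarrow> derivable_criterion \<Sigma> (columns a)"
proof (induction rule: derivable.induct)
  case (Hyp a)
  then show ?case unfolding derivable_criterion_def by blast
next
  case (E1 x y z)
  have "columns (x, x) \<subseteq> ((columns (y, z))\<inverse> O columns (y, z))\<^sup>*"
    by (auto simp: columns_def set_zip)
  with E1.IH show ?case by (rule derivable_criterion_absorb)
next
  case (E2 x y)
  have "columns (y, x) = (columns (x, y))\<inverse>" by (auto simp: columns_def set_zip)
  with E2.IH show ?case using derivable_criterion_converse by simp
next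
  case (E3 x y u v)
  have "length x = length y" using derivable_wf_atom[OF E3.hyps(1)] by (simp add: wf_atom_def)
  then have "columns (x, y) \<subseteq> columns (x @ u, y @ v)" by (simp add: columns_def)
  with E3.IH show ?case by (rule derivable_criterion_mono)
next
  case (E4 x y u v)
  then show ?case by (simp add: columns_def)
next
  case (E5 x u y v z w)
  have "columns (x @ y @ z, u @ v @ w) = columns (x @ z @ y, u @ w @ v)"
    using E5.hyps(1-3) by (auto simp: columns_def)
  with E5.IH show ?case by simp
next
  case (E6 x y z w)
  then show ?case using derivable_criterion_E6[of \<Sigma> x w y z] by (simp add: columns_def)
qed

definition derivable_columns :: "atom set \<Rightarrow> (var \<times> var) list \<Rightarrow> bool" where
  "derivable_columns \<Sigma> ps \<longleftrightarrow> derivable \<Sigma> (map fst ps, map snd ps)"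

lemma derivable_columns_zip_iff:
  "length x = length y \<Longrightarrow> derivable_columns \<Sigma> (zip x y) \<longleftrightarrow> derivable \<Sigma> (x, y)"
  by (simp add: derivable_columns_def)

lemma derivable_columns_append: "derivable_columns \<Sigma> ps \<Longrightarrow> derivable_columns \<Sigma> (ps @ qs)"
  unfolding derivable_columns_def
  using derivable.E3[of \<Sigma> "map fst ps" "map snd ps" "map fst qs" "map snd qs"] by simp

lemma derivable_columns_swap:
  "derivable_columns \<Sigma> (ps @ qs @ rs) \<Longrightarrow> derivable_columns \<Sigma> (ps @ rs @ qs)"
  unfolding derivable_columns_def
  using derivable.E5[of "map fst ps" "map snd ps" "map fst qs" "map snd qs" "map fst rs" "map snd rs"]
  by simp

lemma derivable_columns_contract:
  "derivable_columns \<Sigma> (ps @ qs @ qs) \<Longrightarrow> derivable_columns \<Sigma> (ps @ qs)"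
  unfolding derivable_columns_def
  using derivable.E4[of "map fst ps" "map snd ps" "map fst qs" "map snd qs"] by simp

lemma derivable_columns_converse:
  "derivable_columns \<Sigma> ps \<Longrightarrow> derivable_columns \<Sigma> (map prod.swap ps)"
  unfolding derivable_columns_def
  using derivable.E2[of \<Sigma> "map fst ps" "map snd ps"] by (simp add: comp_def)

lemma derivable_columns_parent:
  "derivable_columns \<Sigma> (ps @ map (\<lambda>w. (w, w)) ws) \<Longrightarrow>
   derivable_columns \<Sigma> (map (\<lambda>p. (f p, fst p)) ps @ map (\<lambda>p. (f p, snd p)) ps)"
  unfolding derivable_columns_def
  using derivable.E6[of "map fst ps" "map snd ps" "map f ps" \<Sigma> ws] by (simp add: comp_def)

lemma derivable_columns_remove_duplicate:
  assumes "derivable_columns \<Sigma> (p # ps)" and "p \<in> set ps"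
  shows "derivable_columns \<Sigma> ps"
proof -
  obtain rs ts where ps: "ps = rs @ p # ts" using assms(2) by (meson split_list)
  have "derivable_columns \<Sigma> ([] @ [p] @ (rs @ p # ts))" using assms(1) ps by simp
  then have "derivable_columns \<Sigma> (rs @ [p] @ (ts @ [p]))"
    using derivable_columns_swap[of \<Sigma> "[]" "[p]" "rs @ p # ts"] by simp
  then have "derivable_columns \<Sigma> ((rs @ ts) @ [p] @ [p])"
    using derivable_columns_swap[of \<Sigma> rs "[p]" "ts @ [p]"] by simp
  then have "derivable_columns \<Sigma> (rs @ ts @ [p])"
    using derivable_columns_contract[of \<Sigma> "rs @ ts" "[p]"] by simp
  then show ?thesis using ps derivable_columns_swap[of \<Sigma> rs ts "[p]"] by simp
qed

lemma derivable_columns_mono: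
  assumes "derivable_columns \<Sigma> ps" and "set ps \<subseteq> set qs"
  shows "derivable_columns \<Sigma> qs"
proof -
  have "derivable_columns \<Sigma> (rs @ qs) \<Longrightarrow> set rs \<subseteq> set qs \<Longrightarrow> derivable_columns \<Sigma> qs" for rs
  proof (induction rs)
    case (Cons r rs)
    then show ?case using derivable_columns_remove_duplicate[of \<Sigma> r "rs @ qs"] by auto
  qed simp
  with assms show ?thesis by (blast intro: derivable_columns_append)
qed

definition derivable_within :: "atom set \<Rightarrow> (var \<times> var) set \<Rightarrow> bool" where
  "derivable_within \<Sigma> Q \<longleftrightarrow> (\<exists>ps. derivable_columns \<Sigma> ps \<and> set ps \<subseteq> Q)"

lemma derivable_within_mono:
  "derivable_within \<Sigma> Q \<Longrightarrow> Q \<subseteq> P \<Longrightarrow> derivable_within \<Sigma> P"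
  unfolding derivable_within_def by blast

lemma derivable_within_converse:
  assumes "derivable_within \<Sigma> Q"
  shows "derivable_within \<Sigma> (Q\<inverse>)"
proof -
  obtain ps where "derivable_columns \<Sigma> ps" "set ps \<subseteq> Q"
    using assms unfolding derivable_within_def by blast
  then have "derivable_columns \<Sigma> (map prod.swap ps)" "set (map prod.swap ps) \<subseteq> Q\<inverse>"
    by (simp_all add: derivable_columns_converse) auto
  then show ?thesis unfolding derivable_within_def by blast
qed

lemma derivable_within_parent:
  assumes "derivable_within \<Sigma> Q"
    and parent: "\<And>u v. (u, v) \<in> Q \<Longrightarrow> u \<noteq> v \<Longrightarrow> \<exists>z. (z, u) \<in> T \<and> (z, v) \<in> T"
  shows "derivable_within \<Sigma> T"
proof -
  obtain ps where ps: "derivable_columns \<Sigma> ps" "set ps \<subseteq> Q"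
    using assms(1) unfolding derivable_within_def by blast
  define nd where "nd = filter (\<lambda>p. fst p \<noteq> snd p) ps"
  define dg where "dg = filter (\<lambda>p. fst p = snd p) ps"
  have "set ps \<subseteq> set (nd @ dg)" unfolding nd_def dg_def by auto
  with ps(1) have "derivable_columns \<Sigma> (nd @ dg)" by (rule derivable_columns_mono)
  moreover have "map (\<lambda>w. (w, w)) (map fst dg) = dg"
    unfolding dg_def by (induction ps) auto
  ultimately have "derivable_columns \<Sigma> (nd @ map (\<lambda>w. (w, w)) (map fst dg))" by simp
  then have "derivable_columns \<Sigma> (map (\<lambda>p. (f p, fst p)) nd @ map (\<lambda>p. (f p, snd p)) nd)"
    for f by (rule derivable_columns_parent)
  moreover have "\<forall>p\<in>set nd. \<exists>z. (z, fst p) \<in> T \<and> (z, snd p) \<in> T"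
    using parent ps(2) unfolding nd_def by auto
  then obtain f where "\<forall>p\<in>set nd. (f p, fst p) \<in> T \<and> (f p, snd p) \<in> T"
    by (rule bchoice[THEN exE]) blast
  then have "set (map (\<lambda>p. (f p, fst p)) nd @ map (\<lambda>p. (f p, snd p)) nd) \<subseteq> T"
    by auto
  ultimately show ?thesis unfolding derivable_within_def by blast
qed

lemma sym_relpow: "sym R \<Longrightarrow> sym (R ^^ n)"
proof (induction n)
  case (Suc n)
  have "(R ^^ Suc n)\<inverse> = R\<inverse> O (R ^^ n)\<inverse>" by (simp add: converse_relcomp)
  also have "\<dots> = R O R ^^ n" using Suc by (simp add: sym_conv_converse_eq)
  also have "\<dots> = R ^^ Suc n" by (simp only: relpow.simps relpow_commute)
  finally show ?case by (simp only: sym_conv_converse_eq)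
qed (simp add: sym_Id)

lemma relpow_mono_refl: "refl R \<Longrightarrow> m \<le> n \<Longrightarrow> R ^^ m \<subseteq> R ^^ n"
proof (induction n)
  case (Suc n)
  show ?case
  proof (cases "m = Suc n")
    case False
    with Suc have "R ^^ m \<subseteq> R ^^ n O Id" by simp
    also have "\<dots> \<subseteq> R ^^ Suc n" using \<open>refl R\<close> by (auto simp: refl_on_def)
    finally show ?thesis .
  qed simp
qed simp

lemma finite_subset_relpow_exp:
  assumes "refl R" and "finite P" and "P \<subseteq> R\<^sup>*"
  shows "\<exists>t. P \<subseteq> R ^^ (2 ^ t)"
  using assms(2,3)
proof (induction rule: finite_induct)
  case (insert p P)
  then obtain t where t: "P \<subseteq> R ^^ (2 ^ t)" by blast
  obtain n where n: "p \<in> R ^^ n" using insert.prems rtrancl_power by blast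
  have "n < 2 ^ n" by (rule less_exp)
  also have "\<dots> \<le> 2 ^ max t n" by simp
  finally have "R ^^ n \<subseteq> R ^^ (2 ^ max t n)"
    by (intro relpow_mono_refl[OF assms(1)]) simp
  moreover have "R ^^ (2 ^ t) \<subseteq> R ^^ (2 ^ max t n)"
    by (intro relpow_mono_refl[OF assms(1)]) simp
  ultimately have "insert p P \<subseteq> R ^^ (2 ^ max t n)" using t n by blast
  then show ?case by blast
qed simp

text \<open>A column joined by an R-path of length 2^(t+1) is replaced by the two columns from the
  midpoint of the path.\<close>

lemma derivable_within_relpow_exp:
  assumes "sym R" and "derivable_within \<Sigma> (R ^^ (2 ^ t))"
  shows "derivable_within \<Sigma> R"
  using assms(2)
proof (induction t)
  case (Suc t)
  let ?R = "R ^^ (2 ^ t)"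
  have "R ^^ (2 ^ Suc t) = ?R O ?R" by (simp add: relpow_add[symmetric] mult_2)
  with Suc.prems have "derivable_within \<Sigma> (?R O ?R)" by simp
  moreover have "\<exists>z. (z, u) \<in> ?R \<and> (z, v) \<in> ?R" if "(u, v) \<in> ?R O ?R" for u v
    using that symD[OF sym_relpow[OF assms(1)]] by blast
  ultimately have "derivable_within \<Sigma> ?R" by (rule derivable_within_parent)
  then show ?case by (rule Suc.IH)
qed simp

lemma derivable_within_siblings:
  assumes "derivable_within \<Sigma> P" and "P \<subseteq> (Q\<inverse> O Q)\<^sup>*"
  shows "derivable_within \<Sigma> Q"
proof -
  let ?R = "(Q\<inverse> O Q)\<^sup>="
  obtain ps where ps: "derivable_columns \<Sigma> ps" "set ps \<subseteq> P"
    using assms(1) unfolding derivable_within_def by blast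
  have "set ps \<subseteq> (Q\<inverse> O Q)\<^sup>*" using ps(2) assms(2) by (rule subset_trans)
  then have "set ps \<subseteq> ?R\<^sup>*" by simp
  then obtain t where "set ps \<subseteq> ?R ^^ (2 ^ t)"
    using finite_subset_relpow_exp[OF refl_reflcl, of "set ps"] by blast
  with ps(1) have "derivable_within \<Sigma> (?R ^^ (2 ^ t))"
    unfolding derivable_within_def by blast
  moreover have "sym ?R" unfolding sym_def by blast
  ultimately have "derivable_within \<Sigma> ?R"
    using derivable_within_relpow_exp by blast
  then show ?thesis by (rule derivable_within_parent) blast
qed

lemma derivable_within_columns:
  assumes "a \<in> \<Sigma>" and "wf_atom a"
  shows "derivable_within \<Sigma> (columns a)"
proof -
  have "derivable_columns \<Sigma> (zip (fst a) (snd a))"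
    using assms by (simp add: derivable_columns_zip_iff wf_atom_def derivable.Hyp)
  then show ?thesis unfolding derivable_within_def columns_def by blast
qed

lemma derivable_within_criterion:
  assumes "derivable_criterion \<Sigma> Q" and "\<forall>a\<in>\<Sigma>. wf_atom a"
  shows "derivable_within \<Sigma> Q"
proof -
  obtain a where a: "a \<in> \<Sigma>" and cases: "columns a \<subseteq> Q \<or> columns a \<subseteq> Q\<inverse>
     \<or> columns a \<subseteq> (Q\<inverse> O Q)\<^sup>* \<or> columns a \<subseteq> (Q O Q\<inverse>)\<^sup>*"
    using assms(1) unfolding derivable_criterion_def by blast
  with assms(2) have base: "derivable_within \<Sigma> (columns a)"
    by (blast intro: derivable_within_columns)
  from cases show ?thesis
  proof (elim disjE)
    assume "columns a \<subseteq> Q"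
    with base show ?thesis by (rule derivable_within_mono)
  next
    assume "columns a \<subseteq> Q\<inverse>"
    with base have "derivable_within \<Sigma> (Q\<inverse>)" by (rule derivable_within_mono)
    then show ?thesis using derivable_within_converse[of \<Sigma> "Q\<inverse>"] by simp
  next
    assume "columns a \<subseteq> (Q\<inverse> O Q)\<^sup>*"
    with base show ?thesis by (rule derivable_within_siblings)
  next
    assume "columns a \<subseteq> (Q O Q\<inverse>)\<^sup>*"
    then have "columns a \<subseteq> ((Q\<inverse>)\<inverse> O Q\<inverse>)\<^sup>*" by simp
    with base have "derivable_within \<Sigma> (Q\<inverse>)" by (rule derivable_within_siblings)
    then show ?thesis using derivable_within_converse[of \<Sigma> "Q\<inverse>"] by simp
  qed
qed

theorem derivable_complete:
  assumes "derivable_criterion \<Sigma> (set (zip x y))" and "\<forall>a\<in>\<Sigma>. wf_atom a"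
    and "length x = length y"
  shows "derivable \<Sigma> (x, y)"
proof -
  obtain ps where "derivable_columns \<Sigma> ps" "set ps \<subseteq> set (zip x y)"
    using derivable_within_criterion[OF assms(1,2)] unfolding derivable_within_def by blast
  then have "derivable_columns \<Sigma> (zip x y)" by (rule derivable_columns_mono)
  then show ?thesis using assms(3) by (simp add: derivable_columns_zip_iff)
qed

theorem derivable_iff_criterion:
  assumes "\<forall>a\<in>\<Sigma>. wf_atom a" and "length x = length y"
  shows "derivable \<Sigma> (x, y) \<longleftrightarrow> derivable_criterion \<Sigma> (set (zip x y))"
  using derivable_sound[of \<Sigma> "(x, y)"] derivable_complete[OF _ assms] by (auto simp: columns_def)

section \<open>Computable functions\<close>

definition computable :: "nat \<Rightarrow> (nat list \<Rightarrow> nat) \<Rightarrow> bool" where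
  "computable n h \<longleftrightarrow> (\<exists>f. \<forall>xs. length xs = n \<longrightarrow> eval f xs (h xs))"

abbreviation decidable :: "nat \<Rightarrow> (nat list \<Rightarrow> bool) \<Rightarrow> bool" where
  "decidable n P \<equiv> computable n (\<lambda>xs. of_bool (P xs))"

lemma computable_cong:
  "computable n g \<Longrightarrow> (\<And>xs. length xs = n \<Longrightarrow> g xs = h xs) \<Longrightarrow> computable n h"
  unfolding computable_def by metis

lemma computable_zero: "computable n (\<lambda>_. 0)"
  unfolding computable_def by (blast intro: ev_Zero)

lemma computable_proj: "i < n \<Longrightarrow> computable n (\<lambda>xs. xs ! i)"
  unfolding computable_def by (blast intro: ev_Proj)

lemma computable_compose:
  assumes h: "computable m h"
    and G: "\<And>i. i < m \<Longrightarrow> computable n (\<lambda>xs. G xs ! i)"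
    and len: "\<And>xs. length xs = n \<Longrightarrow> length (G xs) = m"
  shows "computable n (\<lambda>xs. h (G xs))"
proof -
  obtain F where F: "\<forall>ys. length ys = m \<longrightarrow> eval F ys (h ys)"
    using h unfolding computable_def by blast
  obtain fs where fs: "\<And>i xs. i < m \<Longrightarrow> length xs = n \<Longrightarrow> eval (fs i) xs (G xs ! i)"
    using G unfolding computable_def by metis
  have "eval (Comp F (map fs [0..<m])) xs (h (G xs))" if "length xs = n" for xs
    by (rule ev_Comp) (use that F fs len in auto)
  then show ?thesis unfolding computable_def by blast
qed

lemma computable_Suc:
  assumes "computable n g"
  shows "computable n (\<lambda>xs. Suc (g xs))"
proof -
  have "computable 1 (\<lambda>ys. Suc (hd ys))"
    unfolding computable_def by (auto simp: length_Suc_conv intro!: exI[of _ Succ] ev_Succ)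
  then have "computable n (\<lambda>xs. Suc (hd [g xs]))"
    by (rule computable_compose) (use assms in auto)
  then show ?thesis by simp
qed

lemma computable_tl: "computable n g \<Longrightarrow> computable (Suc n) (\<lambda>ys. g (tl ys))"
proof (erule computable_compose)
  show "computable (Suc n) (\<lambda>ys. tl ys ! i)" if "i < n" for i
    by (rule computable_cong[OF computable_proj[of "Suc i"]]) (use that in \<open>simp_all add: nth_tl\<close>)
qed simp

lemma computable_hd: "0 < n \<Longrightarrow> computable n hd"
  by (rule computable_cong[OF computable_proj[of 0]]) (auto simp: hd_conv_nth)

lemma computable_rec_nat:
  assumes f: "computable n f" and g: "computable (Suc (Suc n)) g" and k: "computable n k"
  shows "computable n (\<lambda>xs. rec_nat (f xs) (\<lambda>i r. g (i # r # xs)) (k xs))"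
proof -
  obtain F where F: "\<forall>xs. length xs = n \<longrightarrow> eval F xs (f xs)"
    using f unfolding computable_def by blast
  obtain G where G: "\<forall>xs. length xs = Suc (Suc n) \<longrightarrow> eval G xs (g xs)"
    using g unfolding computable_def by blast
  have prim: "eval (Prim F G) (j # xs) (rec_nat (f xs) (\<lambda>i r. g (i # r # xs)) j)"
    if "length xs = n" for j xs
    by (induction j) (use F G that in \<open>auto intro: ev_Prim0 ev_PrimS\<close>)
  have "computable (Suc n) (\<lambda>ys. rec_nat (f (tl ys)) (\<lambda>i r. g (i # r # tl ys)) (hd ys))"
    unfolding computable_def
  proof (intro exI allI impI)
    fix ys :: "nat list" assume "length ys = Suc n"
    then obtain j xs where "ys = j # xs" "length xs = n" by (cases ys) auto
    then show "eval (Prim F G) ys (rec_nat (f (tl ys)) (\<lambda>i r. g (i # r # tl ys)) (hd ys))"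
      using prim by simp
  qed
  then have "computable n (\<lambda>xs. (\<lambda>ys. rec_nat (f (tl ys)) (\<lambda>i r. g (i # r # tl ys)) (hd ys))
    (k xs # xs))"
  proof (rule computable_compose)
    show "computable n (\<lambda>xs. (k xs # xs) ! i)" if "i < Suc n" for i
      using that k by (cases i) (auto intro: computable_cong[OF computable_proj])
  qed simp
  then show ?thesis by simp
qed

lemma computable_add:
  assumes "computable n f" and "computable n g"
  shows "computable n (\<lambda>xs. f xs + g xs)"
proof -
  have "computable n (\<lambda>xs. rec_nat (f xs) (\<lambda>i r. Suc ((i # r # xs) ! 1)) (g xs))"
    by (intro computable_rec_nat assms computable_Suc computable_proj) simp
  moreover have "rec_nat a (\<lambda>_ r. Suc r) b = a + b" for a b :: nat
    by (induction b) simp_all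
  ultimately show ?thesis by simp
qed

lemma computable_pred:
  assumes "computable n g"
  shows "computable n (\<lambda>xs. g xs - 1)"
proof -
  have "computable n (\<lambda>xs. rec_nat 0 (\<lambda>i r. (i # r # xs) ! 0) (g xs))"
    by (rule computable_rec_nat) (simp_all add: assms computable_zero computable_proj)
  then show ?thesis
  proof (rule computable_cong)
    show "rec_nat 0 (\<lambda>i r. (i # r # xs) ! 0) (g xs) = g xs - 1" for xs
      by (cases "g xs") simp_all
  qed
qed

lemma computable_diff:
  assumes "computable n f" and "computable n g"
  shows "computable n (\<lambda>xs. f xs - g xs)"
proof -
  have "computable n (\<lambda>xs. rec_nat (f xs) (\<lambda>i r. (i # r # xs) ! 1 - 1) (g xs))"
    by (intro computable_rec_nat assms computable_pred computable_proj) simp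
  moreover have "rec_nat a (\<lambda>_ r. r - 1) b = a - b" for a b :: nat
    by (induction b) simp_all
  ultimately show ?thesis by simp
qed

lemma computable_triangle:
  assumes "computable n g"
  shows "computable n (\<lambda>xs. triangle (g xs))"
proof -
  have "computable n (\<lambda>xs. rec_nat 0 (\<lambda>i r. (i # r # xs) ! 1 + Suc ((i # r # xs) ! 0)) (g xs))"
    by (intro computable_rec_nat assms computable_zero computable_add computable_Suc
        computable_proj) simp_all
  moreover have "rec_nat 0 (\<lambda>i r. r + Suc i) m = triangle m" for m
    by (induction m) simp_all
  ultimately show ?thesis by simp
qed

lemma computable_const: "computable n (\<lambda>_. c)"
  by (induction c) (simp_all add: computable_zero computable_Suc)

lemma decidable_eq:
  "computable n f \<Longrightarrow> computable n g \<Longrightarrow> decidable n (\<lambda>xs. f xs = g xs)"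
  by (rule computable_cong[of n "\<lambda>xs. 1 - ((f xs - g xs) + (g xs - f xs))"])
    (auto simp: computable_diff computable_add computable_const)

lemma decidable_less:
  "computable n f \<Longrightarrow> computable n g \<Longrightarrow> decidable n (\<lambda>xs. f xs < g xs)"
  by (rule computable_cong[of n "\<lambda>xs. 1 - (1 - (g xs - f xs))"])
    (auto simp: computable_diff computable_const)

lemma decidable_not: "decidable n P \<Longrightarrow> decidable n (\<lambda>xs. \<not> P xs)"
  by (rule computable_cong[of n "\<lambda>xs. 1 - of_bool (P xs)"])
    (auto simp: computable_diff computable_const)

lemma decidable_disj: "decidable n P \<Longrightarrow> decidable n Q \<Longrightarrow> decidable n (\<lambda>xs. P xs \<or> Q xs)"
  by (rule computable_cong[of n "\<lambda>xs. 1 - (1 - (of_bool (P xs) + of_bool (Q xs)))"])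
    (auto simp: computable_diff computable_add computable_const)

lemma decidable_conj: "decidable n P \<Longrightarrow> decidable n Q \<Longrightarrow> decidable n (\<lambda>xs. P xs \<and> Q xs)"
  using decidable_not[OF decidable_disj[OF decidable_not decidable_not]] by simp

lemma decidable_imp: "decidable n P \<Longrightarrow> decidable n Q \<Longrightarrow> decidable n (\<lambda>xs. P xs \<longrightarrow> Q xs)"
  using decidable_disj[OF decidable_not] by simp

lemma computable_Least:
  assumes P: "decidable (Suc n) (\<lambda>ys. P (hd ys) (tl ys))"
    and ex: "\<And>xs. length xs = n \<Longrightarrow> \<exists>r. P r xs"
  shows "computable n (\<lambda>xs. LEAST r. P r xs)"
proof -
  obtain F where F: "\<forall>ys. length ys = Suc n \<longrightarrow> eval F ys (of_bool (\<not> P (hd ys) (tl ys)))"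
    using decidable_not[OF P] unfolding computable_def by blast
  have "eval (Mu F) xs (LEAST r. P r xs)" if "length xs = n" for xs
  proof (rule ev_Mu)
    show "eval F ((LEAST r. P r xs) # xs) 0"
      using F[rule_format, of "(LEAST r. P r xs) # xs"] that LeastI_ex[OF ex[OF that]] by simp
    show "\<forall>k<LEAST r. P r xs. \<exists>v>0. eval F (k # xs) v"
    proof (intro allI impI)
      fix k assume "k < (LEAST r. P r xs)"
      then have "\<not> P k xs" by (rule not_less_Least)
      then show "\<exists>v>0. eval F (k # xs) v" using F[rule_format, of "k # xs"] that by auto
    qed
  qed
  then show ?thesis unfolding computable_def by blast
qed

lemma Least_less_iff_bex: "(LEAST i. i = k \<or> P i) < (k::nat) \<longleftrightarrow> (\<exists>i<k. P i)"
proof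
  let ?L = "LEAST i. i = k \<or> P i"
  assume "?L < k"
  moreover have "?L = k \<or> P ?L" by (rule LeastI[of _ k]) (rule disjI1, rule refl)
  ultimately have "P ?L" by simp
  with \<open>?L < k\<close> show "\<exists>i<k. P i" by blast
next
  assume "\<exists>i<k. P i"
  then obtain i where "i < k" "P i" by blast
  then have "(LEAST i. i = k \<or> P i) \<le> i" by (intro Least_le disjI2)
  then show "(LEAST i. i = k \<or> P i) < k" using \<open>i < k\<close> by (rule le_less_trans)
qed

lemma decidable_bex:
  assumes "decidable (Suc n) (\<lambda>ys. P (hd ys) (tl ys))" and "computable n k"
  shows "decidable n (\<lambda>xs. \<exists>i<k xs. P i xs)"
proof -
  have "computable n (\<lambda>xs. LEAST i. i = k xs \<or> P i xs)"
    by (intro computable_Least decidable_disj decidable_eq computable_hd computable_tl assms) auto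
  then have "decidable n (\<lambda>xs. (LEAST i. i = k xs \<or> P i xs) < k xs)"
    using assms(2) by (rule decidable_less)
  then show ?thesis by (simp only: Least_less_iff_bex)
qed

lemma decidable_ball:
  assumes "decidable (Suc n) (\<lambda>ys. P (hd ys) (tl ys))" and "computable n k"
  shows "decidable n (\<lambda>xs. \<forall>i<k xs. P i xs)"
  using decidable_not[OF decidable_bex[OF decidable_not[OF assms(1)] assms(2)]] by simp

lemmas computable_intros =
  computable_const computable_proj computable_Suc computable_add computable_diff
  computable_triangle decidable_eq decidable_less decidable_not decidable_conj decidable_disj
  decidable_imp decidable_bex decidable_ball computable_hd computable_tl

section \<open>Decoding pairs and lists\<close>

lemma fst_prod_decode_eq_Least:
  "fst (prod_decode m) = (LEAST a. \<exists>b<Suc m. prod_encode (a, b) = m)"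
proof -
  obtain a b where decode: "prod_decode m = (a, b)" by fastforce
  then have m: "prod_encode (a, b) = m" by (metis prod_decode_inverse)
  have "(LEAST a'. \<exists>b'<Suc m. prod_encode (a', b') = m) = a"
  proof (rule Least_equality)
    show "\<exists>b'<Suc m. prod_encode (a, b') = m"
      using m le_prod_encode_2[of b a] by (auto intro!: exI[of _ b])
    show "a \<le> a'" if "\<exists>b'<Suc m. prod_encode (a', b') = m" for a'
      using that m inj_prod_encode[of UNIV] by (auto dest: injD)
  qed
  then show ?thesis using decode by simp
qed

lemma snd_prod_decode_eq_Least:
  "snd (prod_decode m) = (LEAST b. \<exists>a<Suc m. prod_encode (a, b) = m)"
proof -
  obtain a b where decode: "prod_decode m = (a, b)" by fastforce
  then have m: "prod_encode (a, b) = m" by (metis prod_decode_inverse)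
  have "(LEAST b'. \<exists>a'<Suc m. prod_encode (a', b') = m) = b"
  proof (rule Least_equality)
    show "\<exists>a'<Suc m. prod_encode (a', b) = m"
      using m le_prod_encode_1[of a b] by (auto intro!: exI[of _ a])
    show "b \<le> b'" if "\<exists>a'<Suc m. prod_encode (a', b') = m" for b'
      using that m inj_prod_encode[of UNIV] by (auto dest: injD)
  qed
  then show ?thesis using decode by simp
qed

lemma computable_prod_encode:
  "computable n f \<Longrightarrow> computable n g \<Longrightarrow> computable n (\<lambda>xs. prod_encode (f xs, g xs))"
  unfolding prod_encode_def by (simp add: computable_add computable_triangle)

lemma computable_fst_prod_decode:
  assumes "computable n g"
  shows "computable n (\<lambda>xs. fst (prod_decode (g xs)))"
  unfolding fst_prod_decode_eq_Least
proof (rule computable_Least)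
  show "decidable (Suc n) (\<lambda>ys. \<exists>b<Suc (g (tl ys)). prod_encode (hd ys, b) = g (tl ys))"
    by (intro computable_intros computable_prod_encode assms) auto
  show "\<exists>a b. b < Suc (g xs) \<and> prod_encode (a, b) = g xs" for xs
    using le_prod_encode_2[of "snd (prod_decode (g xs))" "fst (prod_decode (g xs))"]
    by (intro exI[of _ "fst (prod_decode (g xs))"] exI[of _ "snd (prod_decode (g xs))"]) simp
qed

lemma computable_snd_prod_decode:
  assumes "computable n g"
  shows "computable n (\<lambda>xs. snd (prod_decode (g xs)))"
  unfolding snd_prod_decode_eq_Least
proof (rule computable_Least)
  show "decidable (Suc n) (\<lambda>ys. \<exists>a<Suc (g (tl ys)). prod_encode (a, hd ys) = g (tl ys))"
    by (intro computable_intros computable_prod_encode assms) auto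
  show "\<exists>b a. a < Suc (g xs) \<and> prod_encode (a, b) = g xs" for xs
    using le_prod_encode_1[of "fst (prod_decode (g xs))" "snd (prod_decode (g xs))"]
    by (intro exI[of _ "snd (prod_decode (g xs))"] exI[of _ "fst (prod_decode (g xs))"]) simp
qed

abbreviation code_length :: "nat \<Rightarrow> nat" where
  "code_length c \<equiv> length (list_decode c)"

text \<open>Out of range, \<open>code_nth\<close> returns 0 rather than an unspecified value, so that it is
  computable.\<close>

abbreviation code_nth :: "nat \<Rightarrow> nat \<Rightarrow> nat" where
  "code_nth c i \<equiv> nth_default 0 (list_decode c) i"

definition code_drop :: "nat \<Rightarrow> nat \<Rightarrow> nat" where
  "code_drop k c = ((\<lambda>d. snd (prod_decode (d - 1))) ^^ k) c"

lemma prod_decode_0: "prod_decode 0 = (0, 0)"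
  using prod_encode_inverse[of "(0, 0)"] by (simp add: prod_encode_def)

lemma list_decode_eq_Nil_iff: "list_decode c = [] \<longleftrightarrow> c = 0"
  by (metis list_decode.simps(1) list_decode_inverse list_encode.simps(1))

lemma list_decode_snd_prod_decode: "list_decode (snd (prod_decode (c - 1))) = tl (list_decode c)"
  by (cases c) (simp_all add: prod_decode_0 split: prod.split)

lemma list_decode_code_drop: "list_decode (code_drop k c) = drop k (list_decode c)"
proof (induction k)
  case (Suc k)
  have "list_decode (code_drop (Suc k) c) = list_decode (snd (prod_decode (code_drop k c - 1)))"
    by (simp only: code_drop_def funpow.simps comp_apply)
  also have "\<dots> = drop (Suc k) (list_decode c)"
    by (simp only: list_decode_snd_prod_decode Suc.IH drop_Suc tl_drop)
  finally show ?case .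
qed (simp add: code_drop_def)

lemma code_drop_eq_0_iff: "code_drop k c = 0 \<longleftrightarrow> code_length c \<le> k"
  by (metis drop_eq_Nil list_decode_eq_Nil_iff list_decode_code_drop)

lemma code_length_eq_Least: "code_length c = (LEAST k. code_drop k c = 0)"
  by (rule Least_equality[symmetric]) (simp_all add: code_drop_eq_0_iff)

lemma code_nth_eq: "code_nth c i = fst (prod_decode (code_drop i c - 1))"
proof (cases "i < code_length c")
  case True
  then have "list_decode (code_drop i c) = list_decode c ! i # drop (Suc i) (list_decode c)"
    by (simp add: list_decode_code_drop Cons_nth_drop_Suc)
  moreover have "code_drop i c \<noteq> 0" using True by (simp add: code_drop_eq_0_iff)
  ultimately show ?thesis
    using True by (cases "code_drop i c") (auto simp: nth_default_nth split: prod.splits)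
next
  case False
  then have "code_drop i c = 0" by (simp add: code_drop_eq_0_iff)
  with False show ?thesis by (simp add: nth_default_beyond prod_decode_0)
qed

lemma computable_code_drop:
  assumes "computable n k" and "computable n c"
  shows "computable n (\<lambda>xs. code_drop (k xs) (c xs))"
proof -
  have "computable n (\<lambda>xs. rec_nat (c xs) (\<lambda>i r. snd (prod_decode ((i # r # xs) ! 1 - 1))) (k xs))"
    by (intro computable_rec_nat computable_snd_prod_decode computable_diff computable_proj
        computable_const assms) simp
  moreover have "rec_nat d (\<lambda>_ r. f r) m = (f ^^ m) d" for d m and f :: "nat \<Rightarrow> nat"
    by (induction m) simp_all
  ultimately show ?thesis by (simp add: code_drop_def)
qed

lemma computable_code_length:
  assumes "computable n c"
  shows "computable n (\<lambda>xs. code_length (c xs))"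
  unfolding code_length_eq_Least
proof (rule computable_Least)
  show "decidable (Suc n) (\<lambda>ys. code_drop (hd ys) (c (tl ys)) = 0)"
    by (intro computable_intros computable_code_drop assms) simp
  show "\<exists>k. code_drop k (c xs) = 0" for xs
    using code_drop_eq_0_iff by blast
qed

lemma computable_code_nth:
  assumes "computable n c" and "computable n i"
  shows "computable n (\<lambda>xs. code_nth (c xs) (i xs))"
  unfolding code_nth_eq
  by (intro computable_fst_prod_decode computable_diff computable_code_drop
      computable_const assms)

section \<open>Deciding the criterion\<close>

definition path_cert :: "(nat \<times> nat) set \<Rightarrow> nat \<Rightarrow> nat \<Rightarrow> nat \<Rightarrow> bool" where
  "path_cert R a b c \<longleftrightarrow> code_nth c 0 = a \<and> code_nth c (code_length c - 1) = b \<and>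
     (\<forall>s<code_length c - 1. (code_nth c s, code_nth c (Suc s)) \<in> R)"

lemma rtrancl_iff_path_cert: "(a, b) \<in> R\<^sup>* \<longleftrightarrow> (\<exists>c. path_cert R a b c)"
proof
  assume "(a, b) \<in> R\<^sup>*"
  then obtain n f where f: "f 0 = a" "f n = b" "\<forall>i<n. (f i, f (Suc i)) \<in> R"
    by (metis rtrancl_power relpow_fun_conv)
  have nth: "code_nth (list_encode (map f [0..<Suc n])) i = f i" if "i \<le> n" for i
    using that by (simp add: nth_default_nth del: upt_Suc)
  have "path_cert R a b (list_encode (map f [0..<Suc n]))"
    unfolding path_cert_def using f nth by (simp del: upt_Suc)
  then show "\<exists>c. path_cert R a b c" ..
next
  assume "\<exists>c. path_cert R a b c"
  then obtain c where "path_cert R a b c" ..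
  then have "(a, b) \<in> R ^^ (code_length c - 1)"
    unfolding path_cert_def relpow_fun_conv by blast
  then show "(a, b) \<in> R\<^sup>*" by (rule relpow_imp_rtrancl)
qed

lemma not_rtrancl_iff_closed_set:
  assumes "finite (Range R)"
  shows "(a, b) \<notin> R\<^sup>* \<longleftrightarrow> (\<exists>S. finite S \<and> a \<in> S \<and> b \<notin> S \<and> R `` S \<subseteq> S)"
proof
  assume b: "(a, b) \<notin> R\<^sup>*"
  have "R\<^sup>* `` {a} \<subseteq> insert a (Range R)"
    by (auto elim: rtranclE)
  then have "finite (R\<^sup>* `` {a})" by (rule finite_subset) (simp add: assms)
  moreover have "R `` (R\<^sup>* `` {a}) \<subseteq> R\<^sup>* `` {a}" by auto
  ultimately show "\<exists>S. finite S \<and> a \<in> S \<and> b \<notin> S \<and> R `` S \<subseteq> S"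
    using b by blast
next
  assume "\<exists>S. finite S \<and> a \<in> S \<and> b \<notin> S \<and> R `` S \<subseteq> S"
  then obtain S where "a \<in> S" "b \<notin> S" "R `` S \<subseteq> S" by blast
  then show "(a, b) \<notin> R\<^sup>*" using Image_closed_trancl by fastforce
qed

definition code_siblings :: "nat \<Rightarrow> nat \<Rightarrow> (nat \<times> nat) set" where
  "code_siblings xc yc = {(u, v). \<exists>i<code_length xc. \<exists>j<code_length xc.
     code_nth xc i = code_nth xc j \<and> code_nth yc i = u \<and> code_nth yc j = v}"

lemma code_siblings_list_encode:
  assumes "length x = length y"
  shows "code_siblings (list_encode x) (list_encode y) = (set (zip x y))\<inverse> O set (zip x y)"
proof (intro set_eqI iffI)
  fix p assume "p \<in> code_siblings (list_encode x) (list_encode y)"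
  then obtain i j where ij: "i < length x" "j < length x" "x ! i = x ! j" "p = (y ! i, y ! j)"
    using assms by (auto simp: code_siblings_def nth_default_nth)
  have "(x ! i, y ! i) \<in> set (zip x y)" "(x ! j, y ! j) \<in> set (zip x y)"
    using ij(1,2) assms by (auto simp: in_set_zip)
  then show "p \<in> (set (zip x y))\<inverse> O set (zip x y)" using ij(3,4) by auto
next
  fix p assume "p \<in> (set (zip x y))\<inverse> O set (zip x y)"
  then obtain i j where ij: "i < length x" "j < length x" "x ! i = x ! j" "p = (y ! i, y ! j)"
    using assms by (auto simp: set_zip)
  then show "p \<in> code_siblings (list_encode x) (list_encode y)"
    using assms unfolding code_siblings_def by (auto simp: nth_default_nth cong: conj_cong)
qed

lemma finite_Range_code_siblings: "finite (Range (code_siblings xc yc))"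
proof -
  have "Range (code_siblings xc yc) \<subseteq> code_nth yc ` {..<code_length xc}"
    unfolding code_siblings_def by auto
  then show ?thesis by (rule finite_subset) simp
qed

definition closed_cert :: "nat \<Rightarrow> nat \<Rightarrow> nat \<Rightarrow> nat \<Rightarrow> nat \<Rightarrow> bool" where
  "closed_cert xc yc a b c \<longleftrightarrow>
     (\<exists>s<code_length c. code_nth c s = a) \<and> \<not> (\<exists>s<code_length c. code_nth c s = b) \<and>
     (\<forall>s<code_length c. \<forall>i<code_length xc. \<forall>j<code_length xc.
        code_nth xc i = code_nth xc j \<and> code_nth yc i = code_nth c s \<longrightarrow>
        (\<exists>t<code_length c. code_nth c t = code_nth yc j))"

lemma bex_code_nth_iff: "(\<exists>s<code_length c. code_nth c s = u) \<longleftrightarrow> u \<in> set (list_decode c)"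
  by (auto simp: in_set_conv_nth nth_default_nth)

lemma closed_cert_iff:
  "closed_cert xc yc a b c \<longleftrightarrow> a \<in> set (list_decode c) \<and> b \<notin> set (list_decode c) \<and>
     code_siblings xc yc `` set (list_decode c) \<subseteq> set (list_decode c)"
proof -
  have "(\<forall>s<code_length c. Q (code_nth c s)) \<longleftrightarrow> (\<forall>u\<in>set (list_decode c). Q u)" for Q
    by (simp add: all_set_conv_all_nth nth_default_nth)
  from this[of "\<lambda>u. \<forall>i<code_length xc. \<forall>j<code_length xc.
      code_nth xc i = code_nth xc j \<and> code_nth yc i = u \<longrightarrow> code_nth yc j \<in> set (list_decode c)"]
  show ?thesis unfolding closed_cert_def bex_code_nth_iff code_siblings_def by blast
qed

text \<open>Reachability is decided by an unbounded search for a certificate of either answer, which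
  terminates because one of them always exists.\<close>

definition reach_code :: "nat \<Rightarrow> nat \<Rightarrow> nat \<Rightarrow> nat \<Rightarrow> bool" where
  "reach_code xc yc a b \<longleftrightarrow> path_cert (code_siblings xc yc) a b
     (LEAST c. path_cert (code_siblings xc yc) a b c \<or> closed_cert xc yc a b c)"

lemma certificate_exists: "\<exists>c. path_cert (code_siblings xc yc) a b c \<or> closed_cert xc yc a b c"
proof (cases "(a, b) \<in> (code_siblings xc yc)\<^sup>*")
  case True
  then show ?thesis unfolding rtrancl_iff_path_cert by blast
next
  case False
  then obtain S where S: "finite S" "a \<in> S" "b \<notin> S" "code_siblings xc yc `` S \<subseteq> S"
    by (auto simp: not_rtrancl_iff_closed_set[OF finite_Range_code_siblings])
  then have "closed_cert xc yc a b (list_encode (sorted_list_of_set S))"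
    unfolding closed_cert_iff list_encode_inverse set_sorted_list_of_set[OF S(1)] by blast
  then show ?thesis by blast
qed

lemma closed_cert_not_rtrancl: "closed_cert xc yc a b c \<Longrightarrow> (a, b) \<notin> (code_siblings xc yc)\<^sup>*"
proof
  assume "closed_cert xc yc a b c" and "(a, b) \<in> (code_siblings xc yc)\<^sup>*"
  then show False
    unfolding closed_cert_iff using Image_closed_trancl[of "code_siblings xc yc"] by blast
qed

lemma reach_code_iff: "reach_code xc yc a b \<longleftrightarrow> (a, b) \<in> (code_siblings xc yc)\<^sup>*"
proof -
  let ?c = "LEAST c. path_cert (code_siblings xc yc) a b c \<or> closed_cert xc yc a b c"
  have "path_cert (code_siblings xc yc) a b ?c \<or> closed_cert xc yc a b ?c"
    using certificate_exists by (rule LeastI_ex)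
  then show ?thesis
    unfolding reach_code_def using rtrancl_iff_path_cert closed_cert_not_rtrancl by blast
qed

lemma decidable_reach_code:
  assumes "computable n xc" "computable n yc" "computable n a" "computable n b"
  shows "decidable n (\<lambda>xs. reach_code (xc xs) (yc xs) (a xs) (b xs))"
proof -
  note intros = computable_intros computable_code_length computable_code_nth
  have "computable n (\<lambda>xs. LEAST c. path_cert (code_siblings (xc xs) (yc xs)) (a xs) (b xs) c \<or>
      closed_cert (xc xs) (yc xs) (a xs) (b xs) c)"
  proof (rule computable_Least)
    show "decidable (Suc n) (\<lambda>ys.
      path_cert (code_siblings (xc (tl ys)) (yc (tl ys))) (a (tl ys)) (b (tl ys)) (hd ys) \<or>
      closed_cert (xc (tl ys)) (yc (tl ys)) (a (tl ys)) (b (tl ys)) (hd ys))"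
      unfolding path_cert_def closed_cert_def code_siblings_def mem_Collect_eq case_prod_conv
      by (intro intros assms) simp_all
  qed (rule certificate_exists)
  then show ?thesis
    unfolding reach_code_def path_cert_def code_siblings_def mem_Collect_eq case_prod_conv
    by (intro intros assms) simp_all
qed

definition columns_code_subset :: "nat \<Rightarrow> nat \<Rightarrow> nat \<Rightarrow> nat \<Rightarrow> bool" where
  "columns_code_subset ac bc xc yc \<longleftrightarrow> (\<forall>i<code_length ac. \<exists>k<code_length xc.
     code_nth ac i = code_nth xc k \<and> code_nth bc i = code_nth yc k)"

definition columns_code_reach :: "nat \<Rightarrow> nat \<Rightarrow> nat \<Rightarrow> nat \<Rightarrow> bool" where
  "columns_code_reach ac bc xc yc \<longleftrightarrow>
     (\<forall>i<code_length ac. reach_code xc yc (code_nth ac i) (code_nth bc i))"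

definition criterion_code :: "nat \<Rightarrow> bool" where
  "criterion_code n \<longleftrightarrow>
     (let sc = fst (prod_decode n); xc = fst (prod_decode (snd (prod_decode n)));
          yc = snd (prod_decode (snd (prod_decode n)))
      in \<exists>k<code_length sc.
           let ac = fst (prod_decode (code_nth sc k)); bc = snd (prod_decode (code_nth sc k))
           in columns_code_subset ac bc xc yc \<or> columns_code_subset ac bc yc xc \<or>
              columns_code_reach ac bc xc yc \<or> columns_code_reach ac bc yc xc)"

lemma decidable_criterion_code: "decidable 1 (\<lambda>xs. criterion_code (xs ! 0))"
  unfolding criterion_code_def columns_code_subset_def columns_code_reach_def Let_def
  by (intro computable_intros computable_code_length computable_code_nth
      computable_fst_prod_decode computable_snd_prod_decode decidable_reach_code) simp_all

lemma set_zip_subset_iff: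
  "length a = length b \<Longrightarrow> set (zip a b) \<subseteq> R \<longleftrightarrow> (\<forall>i<length a. (a ! i, b ! i) \<in> R)"
  by (auto simp: set_zip)

lemma in_set_zip_iff_nth:
  "length x = length y \<Longrightarrow> (u, v) \<in> set (zip x y) \<longleftrightarrow> (\<exists>k<length x. u = x ! k \<and> v = y ! k)"
  by (auto simp: set_zip)

lemma columns_code_subset_list_encode:
  assumes "length a = length b" and "length x = length y"
  shows "columns_code_subset (list_encode a) (list_encode b) (list_encode x) (list_encode y) \<longleftrightarrow>
    set (zip a b) \<subseteq> set (zip x y)"
  using assms unfolding columns_code_subset_def set_zip_subset_iff[OF assms(1)]
  by (simp add: nth_default_nth in_set_zip_iff_nth cong: conj_cong)

lemma columns_code_reach_list_encode:
  assumes "length a = length b" and "length x = length y"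
  shows "columns_code_reach (list_encode a) (list_encode b) (list_encode x) (list_encode y) \<longleftrightarrow>
    set (zip a b) \<subseteq> ((set (zip x y))\<inverse> O set (zip x y))\<^sup>*"
  using assms unfolding columns_code_reach_def set_zip_subset_iff[OF assms(1)] reach_code_iff
  by (simp add: nth_default_nth code_siblings_list_encode)

lemma criterion_code_encode_instance:
  assumes "\<forall>a\<in>set S. wf_atom a" and "length x = length y"
  shows "criterion_code (encode_instance S (x, y)) \<longleftrightarrow> derivable_criterion (set S) (set (zip x y))"
proof -
  let ?Q = "set (zip x y)"
  define ok where "ok a \<longleftrightarrow> columns a \<subseteq> ?Q \<or> columns a \<subseteq> ?Q\<inverse> \<or>
    columns a \<subseteq> (?Q\<inverse> O ?Q)\<^sup>* \<or> columns a \<subseteq> (?Q O ?Q\<inverse>)\<^sup>*" for a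
  have conv: "set (zip y x) = ?Q\<inverse>" by (auto simp: in_set_zip)
  have wf: "length (fst (S ! k)) = length (snd (S ! k))" if "k < length S" for k
    using assms(1) that by (simp add: wf_atom_def)
  have "criterion_code (encode_instance S (x, y)) \<longleftrightarrow> (\<exists>k<length S. ok (S ! k))"
    unfolding criterion_code_def Let_def ok_def columns_def using assms(2) wf
    by (simp add: encode_instance_def encode_atom_def encode_tuple_def nth_default_nth
        columns_code_subset_list_encode columns_code_reach_list_encode conv cong: conj_cong)
  also have "\<dots> \<longleftrightarrow> (\<exists>a\<in>set S. ok a)" by (metis in_set_conv_nth)
  finally show ?thesis unfolding derivable_criterion_def ok_def .
qed

theorem theorem2:
  shows "\<exists>f :: recf. \<forall>(S :: atom list) (x :: tuple) (y :: tuple).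
           (\<forall>a \<in> set S. wf_atom a) \<longrightarrow> length x = length y \<longrightarrow>
           eval f [encode_instance S (x, y)] (if derivable (set S) (x, y) then 1 else 0)"
proof -
  obtain f where f: "\<And>xs. length xs = 1 \<Longrightarrow> eval f xs (of_bool (criterion_code (xs ! 0)))"
    using decidable_criterion_code unfolding computable_def by blast
  have "eval f [encode_instance S (x, y)] (if derivable (set S) (x, y) then 1 else 0)"
    if "\<forall>a \<in> set S. wf_atom a" and "length x = length y" for S x y
    using f[of "[encode_instance S (x, y)]"]
    by (simp add: derivable_iff_criterion criterion_code_encode_instance that of_bool_def)
  then show ?thesis by blast
qed

end
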